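(* Let $p$ be a prime and $n$ a positive integer. Let $H_n(\mathbf{Q}_p)=\mathbf{Q}_p^n\times\mathbf{Q}_p^n\times\mathbf{Q}_p$ with the group operation $$(x,y,t)\diamond(x',y',t')=\Big(x+x',\,y+y',\,t+t'+\sum_{j=1}^n x_j y_j'\Big),$$ and for $r\in\mathbf{Q}_p$ let $\delta_r((x,y,t))=(rx,ry,r^2t)$. Define $$N((x,y,t))=\max(|x_1|_p,\ldots,|x_n|_p,|y_1|_p,\ldots,|y_n|_p,|t|_p^{1/2}).$$ Then for all $(x,y,t),(x',y',t')\in H_n(\mathbf{Q}_p)$ and $r\in\mathbf{Q}_p$: (i) $N((x,y,t)\diamond(x',y',t'))\le\max(N((x,y,t)),N((x',y',t')))$; (ii) $N((x,y,t)^{-1})=N((x,y,t))$, where $(x,y,t)^{-1}$ is the inverse in $H_n(\mathbf{Q}_p)$; (iii) $N(\delta_r((x,y,t)))=|r|_p\,N((x,y,t))$. Consequently $N((x',y',t')^{-1}\diamond(x,y,t))$ is a left-invariant ultrametric and $N((x,y,t)\diamond(x',y',t')^{-1})$ is a right-invariant ultrametric on $H_n(\mathbf{Q}_p)$, each determining the product topology coming from the standard topology on $\mathbf{Q}_p$.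
   Context: $|\cdot|_p$ denotes the $p$-adic absolute value on the field $\mathbf{Q}_p$ of $p$-adic numbers. The inverse in this group is $(x,y,t)^{-1}=(-x,-y,-t+\sum_j x_jy_j)$. A metric $d$ is an ultrametric if $d(x,z)\le\max(d(x,y),d(y,z))$; it is left-invariant if $d(ax,ay)=d(x,y)$ for all $a,x,y$, and right-invariant if $d(xb,yb)=d(x,y)$. *)

theory Defs
  imports "HOL-Analysis.Analysis" "HOL-Computational_Algebra.Computational_Algebra"
begin

definition padic_abs_rat :: "nat \<Rightarrow> rat \<Rightarrow> real" where
  "padic_abs_rat p q =
     (if q = 0 then 0
      else (case quotient_of q of (a, b) \<Rightarrow>
              real p powi (int (multiplicity (int p) b) - int (multiplicity (int p) a))))"

text \<open>This is the definition of Q_p as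
  the completion of (Q, |.|_p); it determines (K, av) up to unique isometric isomorphism.\<close>
definition is_Qp :: "nat \<Rightarrow> ('a::field_char_0 \<Rightarrow> real) \<Rightarrow> bool" where
  "is_Qp p av \<longleftrightarrow>
     (\<forall>x. 0 \<le> av x) \<and> (\<forall>x. av x = 0 \<longleftrightarrow> x = 0) \<and>
     (\<forall>x y. av (x * y) = av x * av y) \<and> (\<forall>x y. av (x + y) \<le> av x + av y) \<and>
     (\<forall>q. av (of_rat q) = padic_abs_rat p q) \<and>
     (\<forall>x. \<forall>e>0. \<exists>q. av (x - of_rat q) < e) \<and>
     (\<forall>X::nat \<Rightarrow> 'a. (\<forall>e>0. \<exists>M. \<forall>m\<ge>M. \<forall>k\<ge>M. av (X m - X k) < e) \<longrightarrow>
        (\<exists>L. \<forall>e>0. \<exists>M. \<forall>k\<ge>M. av (X k - L) < e))"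

definition Qp_topology :: "('a::field_char_0 \<Rightarrow> real) \<Rightarrow> 'a topology" where
  "Qp_topology av = Metric_space.mtopology UNIV (\<lambda>a b. av (a - b))"

text \<open>Heisenberg group H_n(K) = K^n x K^n x K, with the index set of K^n a finite type 'n
  (n = CARD('n)).\<close>
type_synonym ('a, 'n) heis = "('n \<Rightarrow> 'a) \<times> ('n \<Rightarrow> 'a) \<times> 'a"

definition heis_mult :: "('a::comm_ring_1, 'n::finite) heis \<Rightarrow> ('a, 'n) heis \<Rightarrow> ('a, 'n) heis"
  (infixl "\<diamondsuit>" 70) where
  "g \<diamondsuit> h = (case g of (x, y, t) \<Rightarrow> case h of (x', y', t') \<Rightarrow>
      (\<lambda>j. x j + x' j, \<lambda>j. y j + y' j, t + t' + (\<Sum>j\<in>UNIV. x j * y' j)))"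

definition heis_inv :: "('a::comm_ring_1, 'n::finite) heis \<Rightarrow> ('a, 'n) heis" where
  "heis_inv g = (case g of (x, y, t) \<Rightarrow>
      (\<lambda>j. - x j, \<lambda>j. - y j, - t + (\<Sum>j\<in>UNIV. x j * y j)))"

definition heis_dil :: "'a::comm_ring_1 \<Rightarrow> ('a, 'n::finite) heis \<Rightarrow> ('a, 'n) heis" where
  "heis_dil r g = (case g of (x, y, t) \<Rightarrow> (\<lambda>j. r * x j, \<lambda>j. r * y j, r^2 * t))"

definition heis_norm :: "('a \<Rightarrow> real) \<Rightarrow> ('a, 'n::finite) heis \<Rightarrow> real" where
  "heis_norm av g = (case g of (x, y, t) \<Rightarrow>
      Max ((\<lambda>j. av (x j)) ` UNIV \<union> (\<lambda>j. av (y j)) ` UNIV \<union> {sqrt (av t)}))"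

definition heis_prod_topology :: "'a topology \<Rightarrow> ('a, 'n::finite) heis topology" where
  "heis_prod_topology T =
     prod_topology (product_topology (\<lambda>_. T) UNIV)
       (prod_topology (product_topology (\<lambda>_. T) UNIV) T)"

end

theory Submission
  imports Defs "HOL-Library.Function_Algebras"
begin

text \<open>The p-adic absolute value is bounded by 1 on the integers, hence non-archimedean: the
  binomial expansion gives \<open>|x + y|^n \<le> (n + 1) max(|x|, |y|)^n\<close> for every n.  In a product or
  an inverse, the x- and y-coordinates are sums of coordinates of norm at most N, and the centre
  coordinate is a sum of centre coordinates and of products of two such coordinates, all of
  absolute value at most \<open>N^2\<close>; this gives (i) and (ii), while (iii) is homogeneity.  Seen from a base point g, each of them differs
  from the coordinatewise distance to g only in the centre coordinate, by a bilinear term of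
  absolute value at most \<open>N(g)\<close> times either distance; so each distance is bounded by
  \<open>r \<mapsto> max r (sqrt (N(g) r))\<close> of the other, and the topologies agree.\<close>

lemma padic_abs_rat_of_nat_le_1:
  assumes "0 < p"
  shows "padic_abs_rat p (of_nat m) \<le> 1"
proof (cases "m = 0")
  case False
  have "padic_abs_rat p (of_nat m) = inverse (real p ^ multiplicity (int p) (int m))"
    using False by (simp add: padic_abs_rat_def quotient_of_int power_int_minus power_int_of_nat)
  also have "\<dots> \<le> 1"
    using assms by (simp add: inverse_le_1_iff one_le_power)
  finally show ?thesis .
qed (simp add: padic_abs_rat_def)

lemma ultrametric_imp_Metric_space:
  assumes "\<And>x y. 0 \<le> d x y" and "\<And>x y. d x y = 0 \<longleftrightarrow> x = y"
    and "\<And>x y. d x y = d y x" and "\<And>x y z. d x z \<le> max (d x y) (d y z)"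
  shows "Metric_space M d"
proof
  fix x y z
  have "max (d x y) (d y z) \<le> d x y + d y z"
    using assms(1)[of x y] assms(1)[of y z] by linarith
  then show "d x z \<le> d x y + d y z"
    using assms(4)[where x = x and y = y and z = z] by linarith
qed (use assms in auto)

lemma sqrt_le_iff_le_power2: "0 \<le> c \<Longrightarrow> sqrt x \<le> c \<longleftrightarrow> x \<le> c\<^sup>2"
  using real_sqrt_le_iff[of x "c\<^sup>2"] by simp

lemma sqrt_less_iff_less_power2: "0 \<le> c \<Longrightarrow> sqrt x < c \<longleftrightarrow> x < c\<^sup>2"
  using real_sqrt_less_iff[of x "c\<^sup>2"] by simp

definition sqrt_modulus :: "real \<Rightarrow> real \<Rightarrow> real" where
  "sqrt_modulus K r = max r (sqrt (K * r))"

lemma sqrt_modulus_small: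
  assumes "0 \<le> K" and "0 < \<epsilon>"
  obtains \<delta> where "0 < \<delta>" and "\<And>r. 0 \<le> r \<Longrightarrow> r < \<delta> \<Longrightarrow> sqrt_modulus K r < \<epsilon>"
proof
  show "0 < min \<epsilon> (\<epsilon>\<^sup>2 / (K + 1))"
    using assms by simp
  fix r assume r: "0 \<le> r" "r < min \<epsilon> (\<epsilon>\<^sup>2 / (K + 1))"
  have "K * r \<le> (K + 1) * r"
    using r by (simp add: algebra_simps)
  also have "\<dots> < \<epsilon>\<^sup>2"
    using r assms by (simp add: field_simps)
  finally have "sqrt (K * r) < sqrt (\<epsilon>\<^sup>2)"
    by (rule real_sqrt_less_mono)
  then show "sqrt_modulus K r < \<epsilon>"
    using r assms by (simp add: sqrt_modulus_def)
qed


section \<open>Absolute values\<close>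

locale abs_value =
  fixes av :: "'a::field \<Rightarrow> real"
  assumes nonneg: "0 \<le> av x"
    and eq_0_iff: "av x = 0 \<longleftrightarrow> x = 0"
    and mult: "av (x * y) = av x * av y"
    and triangle: "av (x + y) \<le> av x + av y"
begin

lemma zero [simp]: "av 0 = 0"
  using eq_0_iff by simp

lemma one [simp]: "av 1 = 1"
  using mult[of 1 1] eq_0_iff[of 1] by simp

lemma power: "av (x ^ n) = av x ^ n"
  by (induction n) (simp_all add: mult)

lemma le_0_iff [simp]: "av x \<le> 0 \<longleftrightarrow> x = 0"
  using nonneg[of x] eq_0_iff[of x] by linarith

lemma minus [simp]: "av (- x) = av x"
proof -
  have "av (- 1) * av (- 1) = 1"
    using mult[of "- 1" "- 1"] by simp
  then have "av (- 1) = 1"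
    using nonneg[of "- 1"] by (metis abs_of_nonneg abs_square_eq_1 power2_eq_square)
  then show ?thesis
    using mult[of "- 1" x] by simp
qed

lemma diff_commute: "av (a - b) = av (b - a)"
  using minus[of "a - b"] by simp

lemma sum_le: "av (sum f A) \<le> (\<Sum>i\<in>A. av (f i))"
  by (induction A rule: infinite_finite_induct) (auto intro: order_trans[OF triangle])

lemma Metric_space_abs_diff: "Metric_space UNIV (\<lambda>a b. av (a - b))"
proof
  fix x y z :: 'a
  show "av (x - z) \<le> av (x - y) + av (y - z)"
    using triangle[of "x - y" "y - z"] by simp
qed (auto simp: nonneg eq_0_iff intro: diff_commute)

lemma binomial_bound: "av (x + y) ^ n \<le> (real n + 1) * max (av x) (av y) ^ n"
  if of_nat_le_1: "\<And>m. av (of_nat m) \<le> 1"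
proof -
  let ?M = "max (av x) (av y)"
  have term_le: "av (of_nat (n choose k) * x ^ k * y ^ (n - k)) \<le> ?M ^ n" if "k \<le> n" for k
  proof -
    have "av (of_nat (n choose k) * x ^ k * y ^ (n - k))
          = av (of_nat (n choose k)) * (av x ^ k * av y ^ (n - k))"
      by (simp add: mult power)
    also have "\<dots> \<le> 1 * (?M ^ k * ?M ^ (n - k))"
      by (intro mult_mono power_mono of_nat_le_1) (auto simp: nonneg le_max_iff_disj)
    also have "\<dots> = ?M ^ n"
      using that by (simp flip: power_add)
    finally show ?thesis .
  qed
  have "av (x + y) ^ n = av (\<Sum>k\<le>n. of_nat (n choose k) * x ^ k * y ^ (n - k))"
    by (simp only: power[symmetric] binomial_ring)
  also have "\<dots> \<le> (\<Sum>k\<le>n. av (of_nat (n choose k) * x ^ k * y ^ (n - k)))"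
    by (rule sum_le)
  also have "\<dots> \<le> (\<Sum>k\<le>n. ?M ^ n)"
    by (rule sum_mono) (simp add: term_le)
  finally show ?thesis
    by (simp add: algebra_simps)
qed

lemma ultra_if_of_nat_le_1:
  assumes "\<And>m. av (of_nat m) \<le> 1"
  shows "av (x + y) \<le> max (av x) (av y)"
proof (rule ccontr)
  let ?M = "max (av x) (av y)"
  assume "\<not> av (x + y) \<le> ?M"
  then have less: "?M < av (x + y)"
    by (simp only: not_le)
  have "?M \<noteq> 0"
    using less eq_0_iff[of x] eq_0_iff[of y] by (auto simp: max_def)
  moreover have "0 \<le> ?M"
    using nonneg[of x] by (simp add: le_max_iff_disj)
  ultimately have M: "0 < ?M"
    by linarith
  define q where "q = av (x + y) / ?M"
  have q: "1 < q"
    using less M by (simp add: q_def)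
  have "(\<lambda>n. real n / q ^ n + (1 / q) ^ n) \<longlonglongrightarrow> 0 + 0"
    using q by (intro tendsto_add lim_n_over_pown LIMSEQ_realpow_zero) auto
  then have "(\<lambda>n. (real n + 1) / q ^ n) \<longlonglongrightarrow> 0"
    by (simp add: add_divide_distrib power_one_over)
  then have "\<forall>\<^sub>F n in sequentially. (real n + 1) / q ^ n < 1"
    by (rule order_tendstoD) simp
  then obtain n where "(real n + 1) / q ^ n < 1"
    by (auto simp: eventually_sequentially)
  moreover have "0 < av (x + y) ^ n"
    using M less by (intro zero_less_power) linarith
  ultimately have "(real n + 1) * ?M ^ n < av (x + y) ^ n"
    by (simp add: q_def power_divide field_simps)
  then show False
    using binomial_bound[OF assms, of x y n] by simp
qed

end

locale nonarch_abs_value = abs_value +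
  assumes ultra: "av (x + y) \<le> max (av x) (av y)"
begin

lemma ultra_le: "av x \<le> c \<Longrightarrow> av y \<le> c \<Longrightarrow> av (x + y) \<le> c"
  using ultra[of x y] by simp

lemma sum_le_bound: "0 \<le> c \<Longrightarrow> (\<And>j. j \<in> A \<Longrightarrow> av (f j) \<le> c) \<Longrightarrow> av (sum f A) \<le> c"
  by (induction A rule: infinite_finite_induct) (auto intro: ultra_le)

lemma sum_prod_le:
  assumes "0 \<le> U" "0 \<le> V" "\<And>j. j \<in> A \<Longrightarrow> av (u j) \<le> U" "\<And>j. j \<in> A \<Longrightarrow> av (v j) \<le> V"
  shows "av (\<Sum>j\<in>A. u j * v j) \<le> U * V"
  using assms by (intro sum_le_bound) (auto simp: mult nonneg intro: mult_mono)

end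

lemma is_Qp_imp_nonarch_abs_value:
  assumes "is_Qp p av" and "prime p"
  shows "nonarch_abs_value av"
proof -
  interpret abs_value av
    using assms(1) by unfold_locales (auto simp: is_Qp_def)
  have "av (of_nat m) \<le> 1" for m
    using assms padic_abs_rat_of_nat_le_1[of p m] prime_gt_0_nat[of p]
    by (metis is_Qp_def of_rat_of_nat_eq)
  then show ?thesis
    by unfold_locales (rule ultra_if_of_nat_le_1)
qed


section \<open>The Heisenberg group\<close>

lemma heis_mult_eq:
  "(x, y, t) \<diamondsuit> (x', y', t') = (\<lambda>j. x j + x' j, \<lambda>j. y j + y' j, t + t' + (\<Sum>j\<in>UNIV. x j * y' j))"
  by (simp add: heis_mult_def)

lemma heis_inv_eq: "heis_inv (x, y, t) = (\<lambda>j. - x j, \<lambda>j. - y j, - t + (\<Sum>j\<in>UNIV. x j * y j))"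
  by (simp add: heis_inv_def)

lemma heis_dil_eq: "heis_dil r (x, y, t) = (\<lambda>j. r * x j, \<lambda>j. r * y j, r\<^sup>2 * t)"
  by (simp add: heis_dil_def)

context
  fixes g h k :: "('a::comm_ring_1, 'n::finite) heis"
begin

lemma heis_mult_assoc: "g \<diamondsuit> h \<diamondsuit> k = g \<diamondsuit> (h \<diamondsuit> k)"
  by (cases g; cases h; cases k) (simp add: heis_mult_eq sum.distrib algebra_simps)

lemma heis_mult_0_right: "g \<diamondsuit> 0 = g"
  by (cases g) (simp add: heis_mult_eq zero_prod_def zero_fun_def)

lemma heis_inv_inv: "heis_inv (heis_inv g) = g"
  by (cases g) (simp add: heis_inv_eq)

lemma heis_inv_mult: "heis_inv (g \<diamondsuit> h) = heis_inv h \<diamondsuit> heis_inv g"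
  by (cases g; cases h) (simp add: heis_mult_eq heis_inv_eq sum.distrib sum_negf algebra_simps)

lemma heis_inv_mult_cancel_left: "heis_inv g \<diamondsuit> (g \<diamondsuit> h) = h"
  by (cases g; cases h)
    (simp add: heis_mult_eq heis_inv_eq sum.distrib sum_subtractf sum_negf algebra_simps)

lemma heis_mult_inv_cancel_left: "g \<diamondsuit> (heis_inv g \<diamondsuit> h) = h"
  by (cases g; cases h)
    (simp add: heis_mult_eq heis_inv_eq sum.distrib sum_subtractf sum_negf algebra_simps)

end

lemma heis_inv_mult_eq_0_iff: "heis_inv h \<diamondsuit> g = 0 \<longleftrightarrow> g = h"
  by (metis heis_mult_0_right heis_mult_inv_cancel_left heis_inv_mult_cancel_left)

lemma heis_mult_inv_eq_0_iff: "g \<diamondsuit> heis_inv h = 0 \<longleftrightarrow> g = h"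
  using heis_inv_mult_eq_0_iff[of "heis_inv g" "heis_inv h"]
  by (metis heis_inv_inv heis_inv_mult)

definition heis_ldist :: "('a::comm_ring_1 \<Rightarrow> real) \<Rightarrow> ('a, 'n::finite) heis \<Rightarrow> ('a, 'n) heis \<Rightarrow> real"
  where "heis_ldist av g h = heis_norm av (heis_inv h \<diamondsuit> g)"

definition heis_rdist :: "('a::comm_ring_1 \<Rightarrow> real) \<Rightarrow> ('a, 'n::finite) heis \<Rightarrow> ('a, 'n) heis \<Rightarrow> real"
  where "heis_rdist av g h = heis_norm av (g \<diamondsuit> heis_inv h)"

lemma heis_ldist_mult_left: "heis_ldist av (a \<diamondsuit> g) (a \<diamondsuit> h) = heis_ldist av g h"
  by (simp add: heis_ldist_def heis_inv_mult heis_mult_assoc heis_inv_mult_cancel_left)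

lemma heis_rdist_mult_right: "heis_rdist av (g \<diamondsuit> b) (h \<diamondsuit> b) = heis_rdist av g h"
  by (simp add: heis_rdist_def heis_inv_mult heis_mult_assoc heis_mult_inv_cancel_left)

lemma heis_inv_mult_Pair:
  "heis_inv (x, y, t) \<diamondsuit> (x', y', t')
   = (\<lambda>j. x' j - x j, \<lambda>j. y' j - y j, (t' - t) + - (\<Sum>j\<in>UNIV. x j * (y' j - y j)))"
  by (simp add: heis_mult_eq heis_inv_eq right_diff_distrib sum_subtractf sum_negf)

lemma heis_mult_inv_Pair:
  "(x', y', t') \<diamondsuit> heis_inv (x, y, t)
   = (\<lambda>j. x' j - x j, \<lambda>j. y' j - y j, (t' - t) + - (\<Sum>j\<in>UNIV. y j * (x' j - x j)))"
  by (simp add: heis_mult_eq heis_inv_eq right_diff_distrib sum_subtractf sum_negf mult.commute)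


section \<open>The homogeneous norm\<close>

context abs_value
begin

lemma heis_norm_le_iff:
  assumes "0 \<le> c"
  shows "heis_norm av ((x, y, t) :: ('a, 'n::finite) heis) \<le> c
    \<longleftrightarrow> (\<forall>j. av (x j) \<le> c) \<and> (\<forall>j. av (y j) \<le> c) \<and> av t \<le> c\<^sup>2"
  using assms by (auto simp: heis_norm_def sqrt_le_iff_le_power2)

lemma heis_norm_less_iff:
  assumes "0 \<le> c"
  shows "heis_norm av ((x, y, t) :: ('a, 'n::finite) heis) < c
    \<longleftrightarrow> (\<forall>j. av (x j) < c) \<and> (\<forall>j. av (y j) < c) \<and> av t < c\<^sup>2"
  using assms by (auto simp: heis_norm_def sqrt_less_iff_less_power2)

lemma heis_norm_nonneg: "0 \<le> heis_norm av (g :: ('a, 'n::finite) heis)"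
  by (cases g) (simp add: heis_norm_def le_max_iff_disj nonneg)

lemma heis_norm_ge:
  fixes x y :: "'n::finite \<Rightarrow> 'a"
  shows "av (x j) \<le> heis_norm av (x, y, t)" and "av (y j) \<le> heis_norm av (x, y, t)"
    and "av t \<le> (heis_norm av (x, y, t))\<^sup>2"
  using heis_norm_le_iff[where c = "heis_norm av (x, y, t)" and x = x and y = y and t = t]
    heis_norm_nonneg[of "(x, y, t)"] by auto

lemma heis_norm_eq_0_iff: "heis_norm av (g :: ('a, 'n::finite) heis) = 0 \<longleftrightarrow> g = 0"
proof (cases g)
  case (fields x y t)
  have "heis_norm av g = 0 \<longleftrightarrow> heis_norm av g \<le> 0"
    using heis_norm_nonneg[of g] by auto
  also have "\<dots> \<longleftrightarrow> g = 0"
    by (auto simp: fields heis_norm_le_iff fun_eq_iff zero_prod_def)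
  finally show ?thesis .
qed

lemma heis_norm_dil: "heis_norm av (heis_dil r (g :: ('a, 'n::finite) heis)) = av r * heis_norm av g"
proof (cases g)
  case (fields x y t)
  define S where "S = range (\<lambda>j. av (x j)) \<union> range (\<lambda>j. av (y j)) \<union> {sqrt (av t)}"
  have "sqrt (av (r\<^sup>2 * t)) = av r * sqrt (av t)"
    by (simp add: mult power real_sqrt_mult nonneg)
  then have "(*) (av r) ` S = range (\<lambda>j. av (r * x j)) \<union> range (\<lambda>j. av (r * y j)) \<union> {sqrt (av (r\<^sup>2 * t))}"
    by (simp add: S_def image_Un image_image mult)
  then have "heis_norm av (heis_dil r g) = Max ((*) (av r) ` S)"
    by (simp add: fields heis_dil_eq heis_norm_def)
  also have "\<dots> = av r * Max S"
    by (rule mono_Max_commute[symmetric]) (auto simp: S_def mono_def mult_left_mono nonneg)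
  finally show ?thesis
    by (simp add: S_def fields heis_norm_def)
qed

lemma heis_coords_close:
  fixes g h :: "('a, 'n::finite) heis"
  assumes "0 < \<epsilon>" and "heis_norm av (h - g) < min \<epsilon> (sqrt \<epsilon>)"
  shows "av (fst h j - fst g j) < \<epsilon>" and "av (fst (snd h) j - fst (snd g) j) < \<epsilon>"
    and "av (snd (snd h) - snd (snd g)) < \<epsilon>"
proof -
  obtain x y t x' y' t' where g: "g = (x, y, t)" and h: "h = (x', y', t')"
    by (cases g; cases h)
  let ?c = "min \<epsilon> (sqrt \<epsilon>)"
  have c: "0 \<le> ?c" "?c \<le> \<epsilon>" "?c\<^sup>2 \<le> \<epsilon>"
    using assms(1) power_mono[of ?c "sqrt \<epsilon>" 2] by simp_all
  have "heis_norm av (\<lambda>j. x' j - x j, \<lambda>j. y' j - y j, t' - t) < ?c"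
    using assms(2) by (simp add: g h fun_diff_def)
  then have "av (x' j - x j) < ?c \<and> av (y' j - y j) < ?c \<and> av (t' - t) < ?c\<^sup>2"
    unfolding heis_norm_less_iff[OF c(1)] by blast
  then show "av (fst h j - fst g j) < \<epsilon>" and "av (fst (snd h) j - fst (snd g) j) < \<epsilon>"
    and "av (snd (snd h) - snd (snd g)) < \<epsilon>"
    using c by (auto simp: g h)
qed

lemma continuous_map_mtopology_heis_prod_topology:
  fixes d :: "('a, 'n::finite) heis \<Rightarrow> ('a, 'n) heis \<Rightarrow> real"
    and K :: "('a, 'n) heis \<Rightarrow> real"
  assumes d: "Metric_space UNIV d" and K: "\<And>g. 0 \<le> K g"
    and diff_le: "\<And>g h. heis_norm av (h - g) \<le> sqrt_modulus (K g) (d g h)"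
  shows "continuous_map (Metric_space.mtopology UNIV d)
    (heis_prod_topology (Metric_space.mtopology UNIV (\<lambda>a b. av (a - b)))) id"
proof -
  interpret D: Metric_space UNIV d
    by (rule d)
  interpret A: Metric_space UNIV "\<lambda>a b. av (a - b)"
    by (rule Metric_space_abs_diff)
  have cont: "continuous_map D.mtopology A.mtopology f"
    if f: "\<And>g h \<epsilon>. 0 < \<epsilon> \<Longrightarrow> heis_norm av (h - g) < min \<epsilon> (sqrt \<epsilon>) \<Longrightarrow> av (f h - f g) < \<epsilon>"
    for f :: "('a, 'n) heis \<Rightarrow> 'a"
    unfolding D.metric_continuous_map[OF Metric_space_abs_diff]
  proof (intro conjI ballI allI impI)
    fix g :: "('a, 'n) heis" and \<epsilon> :: real
    assume "0 < \<epsilon>"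
    then obtain \<delta> where \<delta>: "0 < \<delta>"
      "\<And>r. 0 \<le> r \<Longrightarrow> r < \<delta> \<Longrightarrow> sqrt_modulus (K g) r < min \<epsilon> (sqrt \<epsilon>)"
      using sqrt_modulus_small[OF K] by (metis min_less_iff_conj real_sqrt_gt_0_iff)
    show "\<exists>\<delta>>0. \<forall>h. h \<in> UNIV \<and> d g h < \<delta> \<longrightarrow> av (f g - f h) < \<epsilon>"
    proof (intro exI[of _ \<delta>] conjI allI impI)
      fix h assume "h \<in> UNIV \<and> d g h < \<delta>"
      then have "heis_norm av (h - g) < min \<epsilon> (sqrt \<epsilon>)"
        using diff_le[where g = g and h = h] \<delta>(2)[OF D.nonneg[of g h]] by (meson order.strict_trans1)
      then show "av (f g - f h) < \<epsilon>"
        using f[OF \<open>0 < \<epsilon>\<close>] diff_commute[of "f g" "f h"] by simp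
    qed (rule \<delta>(1))
  qed simp
  have "continuous_map D.mtopology A.mtopology (\<lambda>g. fst g j)"
    and "continuous_map D.mtopology A.mtopology (\<lambda>g. fst (snd g) j)"
    and "continuous_map D.mtopology A.mtopology (\<lambda>g. snd (snd g))" for j
    using heis_coords_close by (intro cont; blast)+
  then show ?thesis
    by (simp add: heis_prod_topology_def continuous_map_pairwise continuous_map_componentwise_UNIV
        o_def id_def)
qed

lemma continuous_map_heis_prod_topology_mtopology:
  fixes d :: "('a, 'n::finite) heis \<Rightarrow> ('a, 'n) heis \<Rightarrow> real"
    and K :: "('a, 'n) heis \<Rightarrow> real"
  assumes d: "Metric_space UNIV d" and K: "\<And>g. 0 \<le> K g"
    and d_le: "\<And>g h. d g h \<le> sqrt_modulus (K g) (heis_norm av (h - g))"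
  shows "continuous_map (heis_prod_topology (Metric_space.mtopology UNIV (\<lambda>a b. av (a - b))))
    (Metric_space.mtopology UNIV d) id"
proof -
  interpret D: Metric_space UNIV d
    by (rule d)
  interpret A: Metric_space UNIV "\<lambda>a b. av (a - b)"
    by (rule Metric_space_abs_diff)
  show ?thesis
    unfolding D.continuous_map_to_metric
  proof (intro ballI allI impI)
    fix g :: "('a, 'n) heis" and \<epsilon> :: real
    assume "0 < \<epsilon>"
    obtain \<delta> where \<delta>: "0 < \<delta>" "\<And>r. 0 \<le> r \<Longrightarrow> r < \<delta> \<Longrightarrow> sqrt_modulus (K g) r < \<epsilon>"
      using sqrt_modulus_small[OF K \<open>0 < \<epsilon>\<close>] by blast
    obtain x y t where g: "g = (x, y, t)"
      by (cases g)
    define e where "e = min \<delta> (\<delta>\<^sup>2)"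
    define U where "U = PiE UNIV (\<lambda>j. A.mball (x j) e) \<times> PiE UNIV (\<lambda>j. A.mball (y j) e) \<times> A.mball t e"
    show "\<exists>U. openin (heis_prod_topology A.mtopology) U \<and> g \<in> U \<and> (\<forall>h\<in>U. id h \<in> D.mball (id g) \<epsilon>)"
    proof (intro exI[of _ U] conjI ballI)
      show "openin (heis_prod_topology A.mtopology) U"
        by (simp add: U_def heis_prod_topology_def openin_prod_Times_iff openin_PiE)
      show "g \<in> U"
        using \<delta> by (simp add: U_def g e_def PiE_UNIV_domain)
      fix h assume "h \<in> U"
      obtain x' y' t' where h: "h = (x', y', t')"
        by (cases h)
      have "av (x' j - x j) < e" "av (y' j - y j) < e" "av (t' - t) < e" for j
        using \<open>h \<in> U\<close> diff_commute[of "x' j" "x j"] diff_commute[of "y' j" "y j"] diff_commute[of t' t]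
        by (auto simp: U_def h PiE_UNIV_domain)
      moreover have "e \<le> \<delta>" "e \<le> \<delta>\<^sup>2"
        by (simp_all add: e_def)
      ultimately have "heis_norm av (h - g) < \<delta>"
        using \<delta>(1) by (auto simp: g h fun_diff_def heis_norm_less_iff intro: less_le_trans)
      then have "d g h < \<epsilon>"
        using d_le[where g = g and h = h] \<delta>(2)[OF heis_norm_nonneg] by (meson order.strict_trans1)
      then show "id h \<in> D.mball (id g) \<epsilon>"
        by simp
    qed
  qed
qed

lemma mtopology_eq_heis_prod_topology:
  fixes d :: "('a, 'n::finite) heis \<Rightarrow> ('a, 'n) heis \<Rightarrow> real"
    and K :: "('a, 'n) heis \<Rightarrow> real"
  assumes d: "Metric_space UNIV d" and K: "\<And>g. 0 \<le> K g"
    and d_le: "\<And>g h. d g h \<le> sqrt_modulus (K g) (heis_norm av (h - g))"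
    and diff_le: "\<And>g h. heis_norm av (h - g) \<le> sqrt_modulus (K g) (d g h)"
  shows "Metric_space.mtopology UNIV d
    = heis_prod_topology (Metric_space.mtopology UNIV (\<lambda>a b. av (a - b)))"
proof -
  have "topspace (heis_prod_topology (Metric_space.mtopology UNIV (\<lambda>a b. av (a - b))))
      = (UNIV :: ('a, 'n) heis set)"
    by (simp add: heis_prod_topology_def PiE_UNIV_domain
        Metric_space.topspace_mtopology[OF Metric_space_abs_diff])
  then have "homeomorphic_map (Metric_space.mtopology UNIV d)
      (heis_prod_topology (Metric_space.mtopology UNIV (\<lambda>a b. av (a - b)))) id"
    using continuous_map_mtopology_heis_prod_topology[OF d K diff_le]
      continuous_map_heis_prod_topology_mtopology[OF d K d_le]
    by (auto simp: homeomorphic_map_maps homeomorphic_maps_def)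
  then show ?thesis
    by simp
qed

end

context nonarch_abs_value
begin

lemma heis_norm_mult_le:
  "heis_norm av ((g :: ('a, 'n::finite) heis) \<diamondsuit> h) \<le> max (heis_norm av g) (heis_norm av h)"
proof (cases g; cases h)
  fix x y t x' y' t' assume g: "g = (x, y, t)" and h: "h = (x', y', t')"
  define m where "m = max (heis_norm av g) (heis_norm av h)"
  have m: "0 \<le> m" "heis_norm av g \<le> m" "heis_norm av h \<le> m"
    by (auto simp: m_def le_max_iff_disj heis_norm_nonneg)
  then have bounds: "\<forall>j. av (x j) \<le> m" "\<forall>j. av (y j) \<le> m" "av t \<le> m\<^sup>2"
    "\<forall>j. av (x' j) \<le> m" "\<forall>j. av (y' j) \<le> m" "av t' \<le> m\<^sup>2"
    using heis_norm_le_iff[OF m(1), where x = x and y = y and t = t]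
      heis_norm_le_iff[OF m(1), where x = x' and y = y' and t = t'] g h by auto
  then have "av (\<Sum>j\<in>UNIV. x j * y' j) \<le> m\<^sup>2"
    unfolding power2_eq_square using m(1) by (intro sum_prod_le) auto
  then have "av (t + t' + (\<Sum>j\<in>UNIV. x j * y' j)) \<le> m\<^sup>2"
    using bounds by (intro ultra_le)
  then have "heis_norm av (g \<diamondsuit> h) \<le> m"
    unfolding g h heis_mult_eq heis_norm_le_iff[OF m(1)]
    using bounds by (auto intro: ultra_le)
  then show ?thesis
    by (simp add: m_def)
qed

lemma heis_norm_inv_le: "heis_norm av (heis_inv (g :: ('a, 'n::finite) heis)) \<le> heis_norm av g"
proof (cases g)
  case (fields x y t)
  define m where "m = heis_norm av (x, y, t)"
  have m: "0 \<le> m"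
    by (simp add: m_def heis_norm_nonneg)
  have bounds: "\<forall>j. av (x j) \<le> m" "\<forall>j. av (y j) \<le> m" "av t \<le> m\<^sup>2"
    using heis_norm_ge[where x = x and y = y and t = t] by (simp_all add: m_def)
  then have "av (\<Sum>j\<in>UNIV. x j * y j) \<le> m\<^sup>2"
    unfolding power2_eq_square using m by (intro sum_prod_le) auto
  then have "av (- t + (\<Sum>j\<in>UNIV. x j * y j)) \<le> m\<^sup>2"
    using bounds by (intro ultra_le) simp_all
  then show ?thesis
    unfolding fields m_def[symmetric] heis_inv_eq heis_norm_le_iff[OF m]
    using bounds by simp
qed

lemma heis_norm_inv: "heis_norm av (heis_inv (g :: ('a, 'n::finite) heis)) = heis_norm av g"
  using heis_norm_inv_le[of g] heis_norm_inv_le[of "heis_inv g"] by (simp add: heis_inv_inv)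

lemma heis_norm_shift_center:
  fixes x y :: "'n::finite \<Rightarrow> 'a"
  assumes K: "0 \<le> K" and c: "\<And>s. av c \<le> K * heis_norm av (x, y, s)"
  shows "heis_norm av (x, y, t + c) \<le> sqrt_modulus K (heis_norm av (x, y, t))"
    and "heis_norm av (x, y, t) \<le> sqrt_modulus K (heis_norm av (x, y, t + c))"
proof -
  have shift: "heis_norm av (x, y, s + b) \<le> sqrt_modulus K (heis_norm av (x, y, s))"
    if b: "av b \<le> K * heis_norm av (x, y, s)" for s b
  proof -
    let ?n = "heis_norm av (x, y, s)"
    have n: "0 \<le> ?n" "?n \<le> sqrt_modulus K ?n"
      by (simp_all add: heis_norm_nonneg sqrt_modulus_def)
    have "sqrt (K * ?n) \<le> sqrt_modulus K ?n"
      by (simp add: sqrt_modulus_def)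
    then have "K * ?n \<le> (sqrt_modulus K ?n)\<^sup>2"
      using n by (simp add: sqrt_le_iff_le_power2)
    moreover have "av s \<le> (sqrt_modulus K ?n)\<^sup>2"
      using heis_norm_ge(3)[of s x y] n by (meson order_trans power_mono)
    ultimately show ?thesis
      using n b heis_norm_ge(1,2)[where x = x and y = y and t = s]
      by (subst heis_norm_le_iff) (auto intro: ultra_le order_trans)
  qed
  show "heis_norm av (x, y, t + c) \<le> sqrt_modulus K (heis_norm av (x, y, t))"
    by (rule shift) (rule c)
  show "heis_norm av (x, y, t) \<le> sqrt_modulus K (heis_norm av (x, y, t + c))"
    using shift[of "- c" "t + c"] c by simp
qed

lemma heis_ldist_commute: "heis_ldist av g h = heis_norm av (heis_inv g \<diamondsuit> (h :: ('a, 'n::finite) heis))"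
  using heis_norm_inv[of "heis_inv h \<diamondsuit> g"] by (simp add: heis_ldist_def heis_inv_mult heis_inv_inv)

lemma heis_rdist_commute: "heis_rdist av g h = heis_norm av (h \<diamondsuit> heis_inv (g :: ('a, 'n::finite) heis))"
  using heis_norm_inv[of "g \<diamondsuit> heis_inv h"] by (simp add: heis_rdist_def heis_inv_mult heis_inv_inv)

lemma heis_ldist_ultra: "heis_ldist av g k \<le> max (heis_ldist av g h) (heis_ldist av h (k :: ('a, 'n::finite) heis))"
proof -
  have "heis_inv k \<diamondsuit> g = (heis_inv k \<diamondsuit> h) \<diamondsuit> (heis_inv h \<diamondsuit> g)"
    by (simp add: heis_mult_assoc heis_mult_inv_cancel_left)
  then show ?thesis
    unfolding heis_ldist_def by (metis heis_norm_mult_le max.commute)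
qed

lemma heis_rdist_ultra: "heis_rdist av g k \<le> max (heis_rdist av g h) (heis_rdist av h (k :: ('a, 'n::finite) heis))"
proof -
  have "g \<diamondsuit> heis_inv k = (g \<diamondsuit> heis_inv h) \<diamondsuit> (h \<diamondsuit> heis_inv k)"
    by (simp add: heis_mult_assoc heis_inv_mult_cancel_left)
  then show ?thesis
    unfolding heis_rdist_def by (metis heis_norm_mult_le)
qed

lemma Metric_space_heis_ldist: "Metric_space UNIV (heis_ldist av :: ('a, 'n::finite) heis \<Rightarrow> _)"
proof (rule ultrametric_imp_Metric_space)
  fix g h k :: "('a, 'n) heis"
  show "0 \<le> heis_ldist av g h"
    by (simp add: heis_ldist_def heis_norm_nonneg)
  show "heis_ldist av g h = 0 \<longleftrightarrow> g = h"
    by (simp add: heis_ldist_def heis_norm_eq_0_iff heis_inv_mult_eq_0_iff)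
  show "heis_ldist av g h = heis_ldist av h g"
    using heis_ldist_commute[of g h] by (simp add: heis_ldist_def)
  show "heis_ldist av g k \<le> max (heis_ldist av g h) (heis_ldist av h k)"
    by (rule heis_ldist_ultra)
qed

lemma Metric_space_heis_rdist: "Metric_space UNIV (heis_rdist av :: ('a, 'n::finite) heis \<Rightarrow> _)"
proof (rule ultrametric_imp_Metric_space)
  fix g h k :: "('a, 'n) heis"
  show "0 \<le> heis_rdist av g h"
    by (simp add: heis_rdist_def heis_norm_nonneg)
  show "heis_rdist av g h = 0 \<longleftrightarrow> g = h"
    by (simp add: heis_rdist_def heis_norm_eq_0_iff heis_mult_inv_eq_0_iff)
  show "heis_rdist av g h = heis_rdist av h g"
    using heis_rdist_commute[of g h] by (simp add: heis_rdist_def)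
  show "heis_rdist av g k \<le> max (heis_rdist av g h) (heis_rdist av h k)"
    by (rule heis_rdist_ultra)
qed

lemma heis_ldist_sandwich:
  fixes g h :: "('a, 'n::finite) heis"
  shows "heis_ldist av g h \<le> sqrt_modulus (heis_norm av g) (heis_norm av (h - g))"
    and "heis_norm av (h - g) \<le> sqrt_modulus (heis_norm av g) (heis_ldist av g h)"
proof -
  obtain x y t x' y' t' where g: "g = (x, y, t)" and h: "h = (x', y', t')"
    by (cases g; cases h)
  define c where "c = - (\<Sum>j\<in>UNIV. x j * (y' j - y j))"
  have "av c \<le> heis_norm av g * heis_norm av (\<lambda>j. x' j - x j, \<lambda>j. y' j - y j, s)" for s
    unfolding c_def minus
    using heis_norm_ge(1)[where x = x and y = y and t = t]
      heis_norm_ge(2)[where x = "\<lambda>j. x' j - x j" and y = "\<lambda>j. y' j - y j" and t = s]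
    by (intro sum_prod_le) (auto simp: g heis_norm_nonneg)
  note shift = heis_norm_shift_center[OF heis_norm_nonneg this, of "t' - t"]
  have "heis_inv g \<diamondsuit> h = (\<lambda>j. x' j - x j, \<lambda>j. y' j - y j, (t' - t) + c)"
    and "h - g = (\<lambda>j. x' j - x j, \<lambda>j. y' j - y j, t' - t)"
    by (simp_all add: g h c_def heis_inv_mult_Pair fun_diff_def)
  with shift show "heis_ldist av g h \<le> sqrt_modulus (heis_norm av g) (heis_norm av (h - g))"
    and "heis_norm av (h - g) \<le> sqrt_modulus (heis_norm av g) (heis_ldist av g h)"
    by (simp_all only: heis_ldist_commute)
qed

lemma heis_rdist_sandwich:
  fixes g h :: "('a, 'n::finite) heis"
  shows "heis_rdist av g h \<le> sqrt_modulus (heis_norm av g) (heis_norm av (h - g))"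
    and "heis_norm av (h - g) \<le> sqrt_modulus (heis_norm av g) (heis_rdist av g h)"
proof -
  obtain x y t x' y' t' where g: "g = (x, y, t)" and h: "h = (x', y', t')"
    by (cases g; cases h)
  define c where "c = - (\<Sum>j\<in>UNIV. y j * (x' j - x j))"
  have "av c \<le> heis_norm av g * heis_norm av (\<lambda>j. x' j - x j, \<lambda>j. y' j - y j, s)" for s
    unfolding c_def minus
    using heis_norm_ge(2)[where x = x and y = y and t = t]
      heis_norm_ge(1)[where x = "\<lambda>j. x' j - x j" and y = "\<lambda>j. y' j - y j" and t = s]
    by (intro sum_prod_le) (auto simp: g heis_norm_nonneg)
  note shift = heis_norm_shift_center[OF heis_norm_nonneg this, of "t' - t"]
  have "h \<diamondsuit> heis_inv g = (\<lambda>j. x' j - x j, \<lambda>j. y' j - y j, (t' - t) + c)"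
    and "h - g = (\<lambda>j. x' j - x j, \<lambda>j. y' j - y j, t' - t)"
    by (simp_all add: g h c_def heis_mult_inv_Pair fun_diff_def)
  with shift show "heis_rdist av g h \<le> sqrt_modulus (heis_norm av g) (heis_norm av (h - g))"
    and "heis_norm av (h - g) \<le> sqrt_modulus (heis_norm av g) (heis_rdist av g h)"
    by (simp_all only: heis_rdist_commute)
qed

lemma mtopology_heis_ldist:
  "Metric_space.mtopology UNIV (heis_ldist av :: ('a, 'n::finite) heis \<Rightarrow> _)
    = heis_prod_topology (Metric_space.mtopology UNIV (\<lambda>a b. av (a - b)))"
  by (rule mtopology_eq_heis_prod_topology[OF Metric_space_heis_ldist heis_norm_nonneg
        heis_ldist_sandwich])

lemma mtopology_heis_rdist:
  "Metric_space.mtopology UNIV (heis_rdist av :: ('a, 'n::finite) heis \<Rightarrow> _)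
    = heis_prod_topology (Metric_space.mtopology UNIV (\<lambda>a b. av (a - b)))"
  by (rule mtopology_eq_heis_prod_topology[OF Metric_space_heis_rdist heis_norm_nonneg
        heis_rdist_sandwich])

end

theorem mainTheorem1:
  fixes p :: nat and av :: "'a::field_char_0 \<Rightarrow> real"
  assumes "prime p" and "is_Qp p av"
  shows "(\<forall>(g::('a,'n::finite) heis) h.
            heis_norm av (g \<diamondsuit> h) \<le> max (heis_norm av g) (heis_norm av h))
       \<and> (\<forall>(g::('a,'n) heis). heis_norm av (heis_inv g) = heis_norm av g)
       \<and> (\<forall>r (g::('a,'n) heis). heis_norm av (heis_dil r g) = av r * heis_norm av g)
       \<and> (let dL = (\<lambda>(g::('a,'n) heis) h. heis_norm av (heis_inv h \<diamondsuit> g)) in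
            Metric_space UNIV dL
          \<and> (\<forall>g h k. dL g k \<le> max (dL g h) (dL h k))
          \<and> (\<forall>a g h. dL (a \<diamondsuit> g) (a \<diamondsuit> h) = dL g h)
          \<and> Metric_space.mtopology UNIV dL = heis_prod_topology (Qp_topology av))
       \<and> (let dR = (\<lambda>(g::('a,'n) heis) h. heis_norm av (g \<diamondsuit> heis_inv h)) in
            Metric_space UNIV dR
          \<and> (\<forall>g h k. dR g k \<le> max (dR g h) (dR h k))
          \<and> (\<forall>b g h. dR (g \<diamondsuit> b) (h \<diamondsuit> b) = dR g h)
          \<and> Metric_space.mtopology UNIV dR = heis_prod_topology (Qp_topology av))"
proof -
  interpret nonarch_abs_value av
    using assms by (rule is_Qp_imp_nonarch_abs_value[rotated])
  have dL: "(\<lambda>(g::('a,'n) heis) h. heis_norm av (heis_inv h \<diamondsuit> g)) = heis_ldist av"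
    and dR: "(\<lambda>(g::('a,'n) heis) h. heis_norm av (g \<diamondsuit> heis_inv h)) = heis_rdist av"
    by (simp_all add: fun_eq_iff heis_ldist_def heis_rdist_def)
  show ?thesis
    unfolding Let_def dL dR Qp_topology_def
    using heis_norm_mult_le heis_norm_inv heis_norm_dil
      Metric_space_heis_ldist heis_ldist_ultra heis_ldist_mult_left mtopology_heis_ldist
      Metric_space_heis_rdist heis_rdist_ultra heis_rdist_mult_right mtopology_heis_rdist
    by blast
qed

end
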